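(* Let $S$ be a right loop, $\nu:S\to S/\mathcal Z(S)$ the natural projection, and $\theta:G_S\to G_{S/\mathcal Z(S)}$ the induced surjective group homomorphism $f^S(y,z)\mapsto f^{S/\mathcal Z(S)}(\nu(y),\nu(z))$. Then $\ker\theta$ is isomorphic to a subgroup of the abelian group $\prod_{\mathcal A}\mathcal Z(S)$ for some index set $\mathcal A$ (one may take $\mathcal A$ to be a set of representatives of the cosets $\mathcal Z(S)\circ x$ other than $\mathcal Z(S)$).
   Context: A right loop is a set $S$ with binary operation $\circ$ and two-sided identity $1$ such that each equation $X\circ a=b$ has a unique solution. For $y,z\in S$, $f^S(y,z):S\to S$ sends $x$ to the unique $X$ with $X\circ(y\circ z)=(x\circ y)\circ z$; $G_S\le\mathrm{Sym}(S)$ is generated by all $f^S(y,z)$. A congruence on $S$ is an equivalence relation which is a right subloop of $S\times S$; an invariant right subloop is the class $T$ of $1$ under a congruence, $S/T=\{T\circ x\}$ with $(T\circ x)\circ(T\circ y)=T\circ(x\circ y)$. Centralizing: for congruences $\beta,\gamma$, $\gamma$ centralizes $\beta$ if there is a congruence $(\gamma|\beta)$ on the right loop $\beta\subseteq S\times S$ with: (i) $(x,y)(\gamma|\beta)(u,v)\Rightarrow x\gamma u$; (ii) for $(x,y)\in\beta$, $(u,v)\mapsto u$ is a bijection from the $(\gamma|\beta)$-class of $(x,y)$ to the $\gamma$-class of $x$; (iii) $(x,y)\in\gamma\Rightarrow(x,x)(\gamma|\beta)(y,y)$; (iv) $(x,y)(\gamma|\beta)(u,v)\Rightarrow(y,x)(\gamma|\beta)(v,u)$;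 (v) $(x,y)(\gamma|\beta)(u,v)$, $(y,z)(\gamma|\beta)(v,w)\Rightarrow(x,z)(\gamma|\beta)(u,w)$. The center congruence $\zeta(S)$ is the unique maximal congruence centralized by $S\times S$; the center $\mathcal Z(S)$ is its class of $1$, an invariant right subloop which is an abelian group under $\circ$. *)

theory Defs
  imports "HOL-Algebra.Algebra"
begin

definition right_loop :: "'a set \<Rightarrow> ('a \<Rightarrow> 'a \<Rightarrow> 'a) \<Rightarrow> 'a \<Rightarrow> bool" where
  "right_loop S m e \<longleftrightarrow> e \<in> S \<and> (\<forall>x\<in>S. \<forall>y\<in>S. m x y \<in> S)
     \<and> (\<forall>x\<in>S. m e x = x \<and> m x e = x)
     \<and> (\<forall>a\<in>S. \<forall>b\<in>S. \<exists>!w. w \<in> S \<and> m w a = b)"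

definition rdiv :: "'a set \<Rightarrow> ('a \<Rightarrow> 'a \<Rightarrow> 'a) \<Rightarrow> 'a \<Rightarrow> 'a \<Rightarrow> 'a" where
  "rdiv S m b a = (THE w. w \<in> S \<and> m w a = b)"

definition right_subloop :: "'a set \<Rightarrow> ('a \<Rightarrow> 'a \<Rightarrow> 'a) \<Rightarrow> 'a \<Rightarrow> 'a set \<Rightarrow> bool" where
  "right_subloop S m e T \<longleftrightarrow> T \<subseteq> S \<and> right_loop T m e"

definition pmult :: "('a \<Rightarrow> 'a \<Rightarrow> 'a) \<Rightarrow> 'a \<times> 'a \<Rightarrow> 'a \<times> 'a \<Rightarrow> 'a \<times> 'a" where
  "pmult m p q = (m (fst p) (fst q), m (snd p) (snd q))"

definition loop_cong :: "'a set \<Rightarrow> ('a \<Rightarrow> 'a \<Rightarrow> 'a) \<Rightarrow> 'a \<Rightarrow> ('a \<times> 'a) set \<Rightarrow> bool" where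
  "loop_cong S m e R \<longleftrightarrow> equiv S R \<and> right_subloop (S \<times> S) (pmult m) (e, e) R"

definition centralizes ::
  "'a set \<Rightarrow> ('a \<Rightarrow> 'a \<Rightarrow> 'a) \<Rightarrow> 'a \<Rightarrow> ('a \<times> 'a) set \<Rightarrow> ('a \<times> 'a) set \<Rightarrow> bool" where
  "centralizes S m e \<gamma> \<beta> \<longleftrightarrow>
     (\<exists>C. loop_cong \<beta> (pmult m) (e, e) C
       \<and> (\<forall>x y u v. ((x, y), (u, v)) \<in> C \<longrightarrow> (x, u) \<in> \<gamma>)
       \<and> (\<forall>x y. (x, y) \<in> \<beta> \<longrightarrow> bij_betw fst {p. ((x, y), p) \<in> C} {u. (x, u) \<in> \<gamma>})
       \<and> (\<forall>x y. (x, y) \<in> \<gamma> \<longrightarrow> ((x, x), (y, y)) \<in> C)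
       \<and> (\<forall>x y u v. ((x, y), (u, v)) \<in> C \<longrightarrow> ((y, x), (v, u)) \<in> C)
       \<and> (\<forall>x y z u v w. ((x, y), (u, v)) \<in> C \<longrightarrow> ((y, z), (v, w)) \<in> C
            \<longrightarrow> ((x, z), (u, w)) \<in> C))"

definition center_cong :: "'a set \<Rightarrow> ('a \<Rightarrow> 'a \<Rightarrow> 'a) \<Rightarrow> 'a \<Rightarrow> ('a \<times> 'a) set" where
  "center_cong S m e = (THE \<zeta>. loop_cong S m e \<zeta> \<and> centralizes S m e (S \<times> S) \<zeta>
       \<and> (\<forall>\<zeta>'. loop_cong S m e \<zeta>' \<and> centralizes S m e (S \<times> S) \<zeta>' \<and> \<zeta> \<subseteq> \<zeta>' \<longrightarrow> \<zeta>' = \<zeta>))"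

definition center :: "'a set \<Rightarrow> ('a \<Rightarrow> 'a \<Rightarrow> 'a) \<Rightarrow> 'a \<Rightarrow> 'a set" where
  "center S m e = {x. (e, x) \<in> center_cong S m e}"

definition rcoset :: "('a \<Rightarrow> 'a \<Rightarrow> 'a) \<Rightarrow> 'a set \<Rightarrow> 'a \<Rightarrow> 'a set" where
  "rcoset m T x = {m t x | t. t \<in> T}"

definition quot_carrier :: "'a set \<Rightarrow> ('a \<Rightarrow> 'a \<Rightarrow> 'a) \<Rightarrow> 'a set \<Rightarrow> 'a set set" where
  "quot_carrier S m T = {rcoset m T x | x. x \<in> S}"

definition quot_mult :: "'a set \<Rightarrow> ('a \<Rightarrow> 'a \<Rightarrow> 'a) \<Rightarrow> 'a set \<Rightarrow> 'a set \<Rightarrow> 'a set \<Rightarrow> 'a set" where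
  "quot_mult S m T A B =
     rcoset m T (m (SOME x. x \<in> S \<and> A = rcoset m T x) (SOME y. y \<in> S \<and> B = rcoset m T y))"

definition fperm :: "'a set \<Rightarrow> ('a \<Rightarrow> 'a \<Rightarrow> 'a) \<Rightarrow> 'a \<Rightarrow> 'a \<Rightarrow> 'a \<Rightarrow> 'a" where
  "fperm S m y z = (\<lambda>x\<in>S. rdiv S m (m (m x y) z) (m y z))"

definition GS :: "'a set \<Rightarrow> ('a \<Rightarrow> 'a \<Rightarrow> 'a) \<Rightarrow> ('a \<Rightarrow> 'a) monoid" where
  "GS S m = subgroup_generated (BijGroup S) {fperm S m y z | y z. y \<in> S \<and> z \<in> S}"

definition prod_copies :: "'i set \<Rightarrow> 'a set \<Rightarrow> ('a \<Rightarrow> 'a \<Rightarrow> 'a) \<Rightarrow> 'a \<Rightarrow> ('i \<Rightarrow> 'a) monoid" where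
  "prod_copies A Z m e =
     \<lparr>carrier = (\<Pi>\<^sub>E a\<in>A. Z),
      monoid.mult = (\<lambda>g h. \<lambda>a\<in>A. m (g a) (h a)),
      one = (\<lambda>a\<in>A. e)\<rparr>"

end

theory Submission
  imports Defs
begin

(* The center Z(S) consists exactly of the elements a with (a u) v = a (u v) = u (a v) for all
   u, v: the center congruence is x ~ a x with such an a, centralized via the congruence
   "related by the same central translation", and maximality follows because the pairs
   (e, a) of a centralized congruence force these identities. Every f^S(y,z), hence every
   element of G_S, commutes with left translations by central elements, and
   theta g (Z x) = Z (g x). So an element g of ker theta maps x to c x for a central c that
   depends only on the coset Z x, and g is determined by these c; recording them gives an
   injective homomorphism into a product of copies of Z(S) indexed by the cosets. *)

locale rloop =
  fixes S :: "'a set" and m :: "'a \<Rightarrow> 'a \<Rightarrow> 'a" and e :: 'a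
  assumes right_loop: "right_loop S m e"
begin

lemma one_closed [simp]: "e \<in> S"
  using right_loop by (simp add: right_loop_def)

lemma mult_closed [simp]: "x \<in> S \<Longrightarrow> y \<in> S \<Longrightarrow> m x y \<in> S"
  using right_loop by (simp add: right_loop_def)

lemma one_mult [simp]: "x \<in> S \<Longrightarrow> m e x = x"
  using right_loop by (simp add: right_loop_def)

lemma mult_one [simp]: "x \<in> S \<Longrightarrow> m x e = x"
  using right_loop by (simp add: right_loop_def)

lemma rdiv_ex1: "a \<in> S \<Longrightarrow> b \<in> S \<Longrightarrow> \<exists>!w. w \<in> S \<and> m w a = b"
  using right_loop by (simp add: right_loop_def)

lemma mult_right_cancel: "x \<in> S \<Longrightarrow> y \<in> S \<Longrightarrow> a \<in> S \<Longrightarrow> m x a = m y a \<Longrightarrow> x = y"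
  using rdiv_ex1[of a "m x a"] by auto

lemma rdiv_closed [simp]: "a \<in> S \<Longrightarrow> b \<in> S \<Longrightarrow> rdiv S m b a \<in> S"
  and rdiv_mult [simp]: "a \<in> S \<Longrightarrow> b \<in> S \<Longrightarrow> m (rdiv S m b a) a = b"
  unfolding rdiv_def using theI'[OF rdiv_ex1] by blast+

lemma rdiv_eqI: "a \<in> S \<Longrightarrow> w \<in> S \<Longrightarrow> m w a = b \<Longrightarrow> rdiv S m b a = w"
  using mult_right_cancel[of "rdiv S m b a" w a] by auto

lemma rdiv_mult_cancel [simp]: "a \<in> S \<Longrightarrow> w \<in> S \<Longrightarrow> rdiv S m (m w a) a = w"
  by (rule rdiv_eqI) auto

lemma right_loop_subsetI:
  assumes "T \<subseteq> S" "e \<in> T" "\<And>x y. x \<in> T \<Longrightarrow> y \<in> T \<Longrightarrow> m x y \<in> T"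
    and "\<And>a b. a \<in> T \<Longrightarrow> b \<in> T \<Longrightarrow> rdiv S m b a \<in> T"
  shows "right_loop T m e"
  unfolding right_loop_def
proof (intro conjI ballI)
  fix a b assume "a \<in> T" "b \<in> T"
  with assms show "\<exists>!w. w \<in> T \<and> m w a = b"
    by (intro ex1I[of _ "rdiv S m b a"]) (auto simp: subset_iff)
qed (use assms in auto)

lemma right_loop_pmult: "right_loop (S \<times> S) (pmult m) (e, e)"
  unfolding right_loop_def
proof (intro conjI ballI)
  fix a b assume "a \<in> S \<times> S" "b \<in> S \<times> S"
  then show "\<exists>!w. w \<in> S \<times> S \<and> pmult m w a = b"
    by (intro ex1I[of _ "(rdiv S m (fst b) (fst a), rdiv S m (snd b) (snd a))"])
       (auto simp: pmult_def mem_Times_iff intro: rdiv_eqI)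
qed (auto simp: pmult_def)

lemma rloop_pmult: "rloop (S \<times> S) (pmult m) (e, e)"
  by (rule rloop.intro[OF right_loop_pmult])

lemma rdiv_pmult:
  "a \<in> S \<times> S \<Longrightarrow> b \<in> S \<times> S \<Longrightarrow>
     rdiv (S \<times> S) (pmult m) b a = (rdiv S m (fst b) (fst a), rdiv S m (snd b) (snd a))"
  by (rule rloop.rdiv_eqI[OF rloop_pmult]) (auto simp: pmult_def mem_Times_iff)

definition central :: "'a set" where
  "central = {a \<in> S. \<forall>u\<in>S. \<forall>v\<in>S. m (m a u) v = m a (m u v) \<and> m u (m a v) = m a (m u v)}"

lemma central_closed: "a \<in> central \<Longrightarrow> a \<in> S"
  by (simp add: central_def)

lemma central_assoc: "a \<in> central \<Longrightarrow> u \<in> S \<Longrightarrow> v \<in> S \<Longrightarrow> m (m a u) v = m a (m u v)"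
  by (simp add: central_def)

lemma central_left_commute: "a \<in> central \<Longrightarrow> u \<in> S \<Longrightarrow> v \<in> S \<Longrightarrow> m u (m a v) = m a (m u v)"
  by (simp add: central_def)

lemma central_commute: "a \<in> central \<Longrightarrow> u \<in> S \<Longrightarrow> m u a = m a u"
  using central_left_commute[of a u e] central_closed by simp

lemma one_central [simp]: "e \<in> central"
  by (simp add: central_def)

lemma central_mult_closed:
  assumes a: "a \<in> central" and b: "b \<in> central"
  shows "m a b \<in> central"
  unfolding central_def
proof (intro CollectI conjI ballI)
  have S: "a \<in> S" "b \<in> S" using a b central_closed by auto
  then show "m a b \<in> S" by simp
  fix u v assume u: "u \<in> S" and v: "v \<in> S"
  have "m (m a b) (m u v) = m a (m b (m u v))"
    using central_assoc[OF a] S u v by simp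
  moreover have "m (m (m a b) u) v = m a (m b (m u v))"
    using central_assoc[OF a] central_assoc[OF b] S u v by simp
  moreover have "m u (m (m a b) v) = m a (m b (m u v))"
    using central_assoc[OF a, of b v] central_left_commute[OF a u, of "m b v"]
      central_left_commute[OF b u v] S u v by simp
  ultimately show "m (m (m a b) u) v = m (m a b) (m u v)" "m u (m (m a b) v) = m (m a b) (m u v)"
    by simp_all
qed

lemma central_mult_mult:
  "a \<in> central \<Longrightarrow> b \<in> central \<Longrightarrow> u \<in> S \<Longrightarrow> v \<in> S \<Longrightarrow> m (m a u) (m b v) = m (m a b) (m u v)"
  using central_assoc[of a u "m b v"] central_left_commute[of b u v] central_assoc[of a b "m u v"]
    central_closed by simp

definition cinv :: "'a \<Rightarrow> 'a" where
  "cinv a = rdiv S m e a"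

lemma
  assumes a: "a \<in> central"
  shows cinv_central: "cinv a \<in> central"
    and cinv_mult: "m (cinv a) a = e"
proof -
  let ?c = "cinv a"
  have aS: "a \<in> S" using a central_closed by auto
  have cS: "?c \<in> S" using aS by (simp add: cinv_def)
  show ca: "m ?c a = e" using aS by (simp add: cinv_def)
  have ac: "m a ?c = e" using central_commute[OF a cS] ca by simp
  have left_cancel: "\<And>x y. x \<in> S \<Longrightarrow> y \<in> S \<Longrightarrow> m a x = m a y \<Longrightarrow> x = y"
    using central_commute[OF a] mult_right_cancel aS by metis
  have undo: "\<And>x. x \<in> S \<Longrightarrow> m a (m ?c x) = x"
    using central_assoc[OF a cS] ac by simp
  show "?c \<in> central"
    unfolding central_def
  proof (intro CollectI conjI ballI cS)
    fix u v assume u: "u \<in> S" and v: "v \<in> S"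
    have "m a (m (m ?c u) v) = m u v"
      using central_assoc[OF a, of "m ?c u" v] undo cS u v by simp
    then show "m (m ?c u) v = m ?c (m u v)"
      using left_cancel undo cS u v by simp
    have "m a (m u (m ?c v)) = m u v"
      using central_left_commute[OF a u, of "m ?c v"] undo cS u v by simp
    then show "m u (m ?c v) = m ?c (m u v)"
      using left_cancel undo cS u v by simp
  qed
qed

lemma cinv_cancel: "a \<in> central \<Longrightarrow> x \<in> S \<Longrightarrow> m (cinv a) (m a x) = x"
  using central_assoc[OF cinv_central, of a a x] cinv_mult central_closed by simp

lemma central_divide:
  assumes "a \<in> central" "b \<in> central"
  shows "m b (cinv a) \<in> central" "m (m b (cinv a)) a = b"
  using central_assoc[of b "cinv a" a] cinv_central cinv_mult central_mult_closed assms central_closed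
  by auto

lemma rdiv_central_translate:
  assumes "a \<in> central" "b \<in> central" "x \<in> S" "y \<in> S"
  shows "rdiv S m (m b y) (m a x) = m (m b (cinv a)) (rdiv S m y x)"
  using assms central_divide[of a b] central_mult_mult[of "m b (cinv a)" a "rdiv S m y x" x] central_closed
  by (intro rdiv_eqI) auto

definition central_rel :: "('a \<times> 'a) set" where
  "central_rel = {(x, m a x) | a x. a \<in> central \<and> x \<in> S}"

lemma central_rel_iff: "(x, y) \<in> central_rel \<longleftrightarrow> x \<in> S \<and> (\<exists>a\<in>central. y = m a x)"
  by (auto simp: central_rel_def)

lemma central_rel_subset: "central_rel \<subseteq> S \<times> S"
  using central_closed by (auto simp: central_rel_def)

lemma pmult_central_translate:
  "a \<in> central \<Longrightarrow> b \<in> central \<Longrightarrow> x \<in> S \<Longrightarrow> y \<in> S \<Longrightarrow>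
     pmult m (x, m a x) (y, m b y) = (m x y, m (m a b) (m x y))"
  by (simp add: pmult_def central_mult_mult)

lemma equiv_central_rel: "equiv S central_rel"
proof (rule equivI)
  show "refl_on S central_rel"
    using central_rel_subset by (auto intro!: refl_onI bexI[of _ e] simp: central_rel_iff)
  show "sym central_rel"
  proof (rule symI)
    fix x y assume "(x, y) \<in> central_rel"
    then obtain a where "a \<in> central" "x \<in> S" "y = m a x" by (auto simp: central_rel_iff)
    then show "(y, x) \<in> central_rel"
      using cinv_cancel cinv_central central_closed
      by (auto simp: central_rel_iff intro!: bexI[of _ "cinv a"])
  qed
  show "trans central_rel"
  proof (rule transI)
    fix x y z assume "(x, y) \<in> central_rel" "(y, z) \<in> central_rel"
    then obtain a b where "a \<in> central" "b \<in> central" "x \<in> S" "y = m a x" "z = m b y"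
      by (auto simp: central_rel_iff)
    then show "(x, z) \<in> central_rel"
      using central_assoc[of b a x] central_closed central_mult_closed
      by (auto simp: central_rel_iff intro!: bexI[of _ "m b a"])
  qed
qed (rule central_rel_subset)

lemma right_loop_central_rel: "right_loop central_rel (pmult m) (e, e)"
proof (rule rloop.right_loop_subsetI[OF rloop_pmult])
  show "(e, e) \<in> central_rel" by (auto simp: central_rel_iff intro!: bexI[of _ e])
  fix p q assume "p \<in> central_rel" "q \<in> central_rel"
  then obtain a x b y where p: "p = (x, m a x)" "a \<in> central" "x \<in> S"
    and q: "q = (y, m b y)" "b \<in> central" "y \<in> S"
    by (auto simp: central_rel_def)
  show "pmult m p q \<in> central_rel"
    using p q pmult_central_translate central_mult_closed by (auto simp: central_rel_iff)
  have "rdiv (S \<times> S) (pmult m) q p = (rdiv S m y x, m (m b (cinv a)) (rdiv S m y x))"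
    using p q central_closed by (simp add: rdiv_pmult rdiv_central_translate)
  then show "rdiv (S \<times> S) (pmult m) q p \<in> central_rel"
    using p q central_divide by (auto simp: central_rel_iff)
qed (rule central_rel_subset)

lemma loop_cong_central_rel: "loop_cong S m e central_rel"
  unfolding loop_cong_def right_subloop_def
  using equiv_central_rel right_loop_central_rel central_rel_subset by blast

definition same_translation :: "(('a \<times> 'a) \<times> ('a \<times> 'a)) set" where
  "same_translation = {((x, m a x), (u, m a u)) | a x u. a \<in> central \<and> x \<in> S \<and> u \<in> S}"

lemma same_translation_iff:
  "((x, y), (u, v)) \<in> same_translation \<longleftrightarrow> x \<in> S \<and> u \<in> S \<and> (\<exists>a\<in>central. y = m a x \<and> v = m a u)"
  by (auto simp: same_translation_def)

lemma same_translation_subset: "same_translation \<subseteq> central_rel \<times> central_rel"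
  by (auto simp: same_translation_def central_rel_def)

lemma equiv_same_translation: "equiv central_rel same_translation"
proof (rule equivI)
  show "refl_on central_rel same_translation"
  proof (rule refl_onI)
    fix p assume "p \<in> central_rel"
    then obtain a x where "p = (x, m a x)" "a \<in> central" "x \<in> S" by (auto simp: central_rel_def)
    then show "(p, p) \<in> same_translation" by (auto simp: same_translation_def)
  qed
  show "sym same_translation"
    by (rule symI) (auto simp: same_translation_def)
  show "trans same_translation"
  proof (rule transI)
    fix p q r assume "(p, q) \<in> same_translation" "(q, r) \<in> same_translation"
    then obtain a x u b u' w where a: "a \<in> central" "x \<in> S" "u \<in> S" "p = (x, m a x)" "q = (u, m a u)"
      and b: "b \<in> central" "u' \<in> S" "w \<in> S" "q = (u', m b u')" "r = (w, m b w)"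
      unfolding same_translation_def by blast
    then have "a = b" using mult_right_cancel[of a b u] central_closed by force
    then show "(p, r) \<in> same_translation" using a b by (auto simp: same_translation_iff)
  qed
qed (rule same_translation_subset)

lemma right_loop_same_translation: "right_loop same_translation (pmult (pmult m)) ((e, e), (e, e))"
proof (rule rloop.right_loop_subsetI[OF rloop.rloop_pmult[OF rloop_pmult]])
  show "same_translation \<subseteq> (S \<times> S) \<times> (S \<times> S)"
    using same_translation_subset central_rel_subset by blast
  show "((e, e), (e, e)) \<in> same_translation"
    by (auto simp: same_translation_iff intro!: bexI[of _ e])
  fix p q assume "p \<in> same_translation" "q \<in> same_translation"
  then obtain a x u b y v where p: "p = ((x, m a x), (u, m a u))" "a \<in> central" "x \<in> S" "u \<in> S"
    and q: "q = ((y, m b y), (v, m b v))" "b \<in> central" "y \<in> S" "v \<in> S"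
    by (auto simp: same_translation_def)
  show "pmult (pmult m) p q \<in> same_translation"
    using p q pmult_central_translate central_mult_closed
    by (auto simp: same_translation_iff pmult_def[of "pmult m"])
  let ?c = "m b (cinv a)"
  have "rdiv ((S \<times> S) \<times> (S \<times> S)) (pmult (pmult m)) q p =
      ((rdiv S m y x, m ?c (rdiv S m y x)), (rdiv S m v u, m ?c (rdiv S m v u)))"
    using p q central_closed
    by (simp add: rloop.rdiv_pmult[OF rloop_pmult] rdiv_pmult rdiv_central_translate)
  then show "rdiv ((S \<times> S) \<times> (S \<times> S)) (pmult (pmult m)) q p \<in> same_translation"
    using p q central_divide by (auto simp: same_translation_iff)
qed

lemma centralizes_central_rel: "centralizes S m e (S \<times> S) central_rel"
  unfolding centralizes_def
proof (intro exI[of _ same_translation] conjI allI impI)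
  show "loop_cong central_rel (pmult m) (e, e) same_translation"
    unfolding loop_cong_def right_subloop_def
    using equiv_same_translation right_loop_same_translation same_translation_subset by blast
  fix x y u v assume "((x, y), (u, v)) \<in> same_translation"
  then show "(x, u) \<in> S \<times> S" by (auto simp: same_translation_iff)
next
  fix x y assume "(x, y) \<in> central_rel"
  then obtain a where a: "a \<in> central" "x \<in> S" "y = m a x" by (auto simp: central_rel_iff)
  have "{p. ((x, y), p) \<in> same_translation} = (\<lambda>u. (u, m a u)) ` S"
  proof (intro equalityI subsetI)
    fix p assume "p \<in> {p. ((x, y), p) \<in> same_translation}"
    then obtain u b where "p = (u, m b u)" "u \<in> S" "b \<in> central" "m a x = m b x"
      using a by (cases p) (auto simp: same_translation_iff)
    moreover have "b = a" using calculation a mult_right_cancel[of b a x] central_closed by simp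
    ultimately show "p \<in> (\<lambda>u. (u, m a u)) ` S" by auto
  qed (use a in \<open>auto simp: same_translation_iff\<close>)
  then show "bij_betw fst {p. ((x, y), p) \<in> same_translation} {u. (x, u) \<in> S \<times> S}"
    using a by (simp add: bij_betw_def inj_on_def image_image)
next
  fix x y assume "(x, y) \<in> S \<times> S"
  then show "((x, x), (y, y)) \<in> same_translation"
    by (auto simp: same_translation_iff intro!: bexI[of _ e])
next
  fix x y u v assume "((x, y), (u, v)) \<in> same_translation"
  then obtain a where "a \<in> central" "x \<in> S" "u \<in> S" "y = m a x" "v = m a u"
    by (auto simp: same_translation_iff)
  then show "((y, x), (v, u)) \<in> same_translation"
    using cinv_cancel cinv_central central_closed
    by (auto simp: same_translation_iff intro!: bexI[of _ "cinv a"])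
next
  fix x y z u v w assume "((x, y), (u, v)) \<in> same_translation" "((y, z), (v, w)) \<in> same_translation"
  then obtain a b where "a \<in> central" "b \<in> central" "x \<in> S" "u \<in> S" "y = m a x" "v = m a u"
    "z = m b y" "w = m b v"
    by (auto simp: same_translation_iff)
  then show "((x, z), (u, w)) \<in> same_translation"
    using central_assoc[of b a] central_closed central_mult_closed
    by (auto simp: same_translation_iff intro!: bexI[of _ "m b a"])
qed

lemma loop_cong_one_rdiv:
  assumes R: "loop_cong S m e R" and xy: "(x, y) \<in> R"
  shows "(e, rdiv S m y x) \<in> R"
proof -
  have sub: "R \<subseteq> S \<times> S" and "equiv S R" and loop: "right_loop R (pmult m) (e, e)"
    using R by (auto simp: loop_cong_def right_subloop_def)
  then have x: "x \<in> S" "y \<in> S" and "(x, x) \<in> R" using xy by (auto dest: equiv_class_eq_iff)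
  then obtain w1 w2 where w: "(w1, w2) \<in> R" "pmult m (w1, w2) (x, x) = (x, y)"
    using loop xy unfolding right_loop_def by (metis surj_pair)
  then have "w1 = e" "w2 = rdiv S m y x"
    using sub x mult_right_cancel[of w1 e x] rdiv_eqI[of x w2 y] by (auto simp: pmult_def)
  then show ?thesis using w by simp
qed

(* The pairs (u v, (a u) v), (u v, u (a v)) and (u v, a (u v)) all lie in the class of (e, a)
   under the centralizing congruence, on which fst is injective. *)
lemma centralized_cong_one_central:
  assumes C: "centralizes S m e (S \<times> S) R" and a: "a \<in> S" "(e, a) \<in> R"
  shows "a \<in> central"
proof -
  obtain CR where CR: "loop_cong R (pmult m) (e, e) CR"
    and class_bij: "\<forall>x y. (x, y) \<in> R \<longrightarrow> bij_betw fst {p. ((x, y), p) \<in> CR} {u. (x, u) \<in> S \<times> S}"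
    and diag_mem: "\<forall>x y. (x, y) \<in> S \<times> S \<longrightarrow> ((x, x), (y, y)) \<in> CR"
    using C unfolding centralizes_def by blast
  have "equiv R CR" and loop: "right_loop CR (pmult (pmult m)) ((e, e), (e, e))"
    using CR by (auto simp: loop_cong_def right_subloop_def)
  then have refl: "((e, a), (e, a)) \<in> CR"
    using a by (simp add: equiv_def refl_on_def)
  have closed: "\<And>P Q. P \<in> CR \<Longrightarrow> Q \<in> CR \<Longrightarrow> pmult (pmult m) P Q \<in> CR"
    using loop by (simp add: right_loop_def)
  have diag: "\<And>u. u \<in> S \<Longrightarrow> ((e, e), (u, u)) \<in> CR" using diag_mem by simp
  have trans: "\<And>u. u \<in> S \<Longrightarrow> ((e, a), (u, m a u)) \<in> CR"
    using closed[OF refl diag] a by (simp add: pmult_def)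
  have inj: "inj_on fst {p. ((e, a), p) \<in> CR}" using class_bij a by (simp add: bij_betw_def)
  show ?thesis
    unfolding central_def
  proof (intro CollectI conjI ballI a(1))
    fix u v assume u: "u \<in> S" and v: "v \<in> S"
    have uv: "((e, a), (m u v, m a (m u v))) \<in> CR" using trans u v by simp
    have "((e, a), (m u v, m (m a u) v)) \<in> CR"
      using closed[OF trans[OF u] diag[OF v]] a u v by (simp add: pmult_def)
    then have "(m u v, m (m a u) v) = (m u v, m a (m u v))"
      using uv by (intro inj_onD[OF inj]) simp_all
    then show "m (m a u) v = m a (m u v)" by simp
    have "((e, a), (m u v, m u (m a v))) \<in> CR"
      using closed[OF diag[OF u] trans[OF v]] a u v by (simp add: pmult_def)
    then have "(m u v, m u (m a v)) = (m u v, m a (m u v))"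
      using uv by (intro inj_onD[OF inj]) simp_all
    then show "m u (m a v) = m a (m u v)" by simp
  qed
qed

lemma centralized_cong_subset_central_rel:
  assumes R: "loop_cong S m e R" and C: "centralizes S m e (S \<times> S) R"
  shows "R \<subseteq> central_rel"
proof
  fix p assume p: "p \<in> R"
  obtain x y where xy: "p = (x, y)" "x \<in> S" "y \<in> S"
    using p R by (auto simp: loop_cong_def right_subloop_def)
  have "rdiv S m y x \<in> central"
    using centralized_cong_one_central[OF C] loop_cong_one_rdiv[OF R] p xy by simp
  then show "p \<in> central_rel"
    using xy by (auto simp: central_rel_iff intro!: bexI[of _ "rdiv S m y x"])
qed

lemma center_cong_eq: "center_cong S m e = central_rel"
  unfolding center_cong_def
  using loop_cong_central_rel centralizes_central_rel centralized_cong_subset_central_rel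
  by (intro the_equality) blast+

lemma center_eq: "center S m e = central"
  using central_closed by (auto simp: center_def center_cong_eq central_rel_iff)

abbreviation \<nu> :: "'a \<Rightarrow> 'a set" where
  "\<nu> \<equiv> rcoset m central"

lemma proj_eq_Image: "x \<in> S \<Longrightarrow> \<nu> x = central_rel `` {x}"
  by (auto simp: rcoset_def central_rel_iff)

lemma proj_eq_iff: "x \<in> S \<Longrightarrow> y \<in> S \<Longrightarrow> \<nu> x = \<nu> y \<longleftrightarrow> (x, y) \<in> central_rel"
  using equiv_class_eq_iff[OF equiv_central_rel] by (simp add: proj_eq_Image)

lemma central_rel_mult:
  assumes "(x, x') \<in> central_rel" "(y, y') \<in> central_rel"
  shows "(m x y, m x' y') \<in> central_rel"
proof -
  have "pmult m (x, x') (y, y') \<in> central_rel"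
    using right_loop_central_rel assms unfolding right_loop_def by blast
  then show ?thesis by (simp add: pmult_def)
qed

lemma proj_mult_right_cancel:
  assumes "w \<in> S" "w' \<in> S" "c \<in> S" "\<nu> (m w c) = \<nu> (m w' c)"
  shows "\<nu> w = \<nu> w'"
proof -
  have "(m w c, m w' c) \<in> central_rel" using assms by (simp add: proj_eq_iff)
  then obtain t where t: "t \<in> central" "m w' c = m t (m w c)" by (auto simp: central_rel_iff)
  then have "m w' c = m (m t w) c" using central_assoc assms by simp
  then have "w' = m t w" using mult_right_cancel[of w' "m t w" c] t central_closed assms by simp
  then have "(w, w') \<in> central_rel" using t assms by (auto simp: central_rel_iff)
  then show ?thesis using assms by (simp add: proj_eq_iff)
qed

abbreviation Q :: "'a set set" where
  "Q \<equiv> quot_carrier S m central"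

abbreviation mQ :: "'a set \<Rightarrow> 'a set \<Rightarrow> 'a set" where
  "mQ \<equiv> quot_mult S m central"

lemma quot_carrier_eq: "Q = \<nu> ` S"
  by (auto simp: quot_carrier_def)

lemma quot_mult_proj:
  assumes "a \<in> S" "b \<in> S"
  shows "mQ (\<nu> a) (\<nu> b) = \<nu> (m a b)"
proof -
  let ?x = "SOME x. x \<in> S \<and> \<nu> a = \<nu> x" and ?y = "SOME y. y \<in> S \<and> \<nu> b = \<nu> y"
  have "?x \<in> S \<and> \<nu> a = \<nu> ?x" "?y \<in> S \<and> \<nu> b = \<nu> ?y"
    using someI[of "\<lambda>x. x \<in> S \<and> \<nu> a = \<nu> x" a] someI[of "\<lambda>y. y \<in> S \<and> \<nu> b = \<nu> y" b] assms
    by simp_all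
  then have "(?x, a) \<in> central_rel" "(?y, b) \<in> central_rel"
    using assms proj_eq_iff by metis+
  then have "(m ?x ?y, m a b) \<in> central_rel" by (rule central_rel_mult)
  then have "\<nu> (m ?x ?y) = \<nu> (m a b)"
    using proj_eq_iff central_rel_subset by blast
  then show ?thesis by (simp add: quot_mult_def)
qed

lemma fperm_closed: "x \<in> S \<Longrightarrow> y \<in> S \<Longrightarrow> z \<in> S \<Longrightarrow> fperm S m y z x \<in> S"
  and fperm_mult: "x \<in> S \<Longrightarrow> y \<in> S \<Longrightarrow> z \<in> S \<Longrightarrow> m (fperm S m y z x) (m y z) = m (m x y) z"
  by (simp_all add: fperm_def)

lemma fperm_central_translate:
  assumes t: "t \<in> central" and S: "x \<in> S" "y \<in> S" "z \<in> S"
  shows "fperm S m y z (m t x) = m t (fperm S m y z x)"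
proof -
  have "m (m t (fperm S m y z x)) (m y z) = m t (m (m x y) z)"
    using central_assoc[OF t] fperm_closed fperm_mult S by simp
  also have "\<dots> = m (m (m t x) y) z"
    using central_assoc[OF t] S by simp
  finally have "rdiv S m (m (m (m t x) y) z) (m y z) = m t (fperm S m y z x)"
    using t central_closed fperm_closed S by (intro rdiv_eqI) simp_all
  then show ?thesis
    using t central_closed S by (simp add: fperm_def)
qed

lemma fperm_quot_proj:
  assumes S: "x \<in> S" "y \<in> S" "z \<in> S"
  shows "fperm Q mQ (\<nu> y) (\<nu> z) (\<nu> x) = \<nu> (fperm S m y z x)"
proof -
  let ?w = "fperm S m y z x"
  have w: "?w \<in> S" "m ?w (m y z) = m (m x y) z" using fperm_closed fperm_mult S by auto
  have "rdiv Q mQ (\<nu> (m (m x y) z)) (\<nu> (m y z)) = \<nu> ?w"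
    unfolding rdiv_def
  proof (rule the_equality)
    have "mQ (\<nu> ?w) (\<nu> (m y z)) = \<nu> (m ?w (m y z))"
      using w S by (intro quot_mult_proj) simp_all
    then show "\<nu> ?w \<in> Q \<and> mQ (\<nu> ?w) (\<nu> (m y z)) = \<nu> (m (m x y) z)"
      using w quot_carrier_eq by auto
    fix W assume W: "W \<in> Q \<and> mQ W (\<nu> (m y z)) = \<nu> (m (m x y) z)"
    then obtain w' where w': "w' \<in> S" "W = \<nu> w'" using quot_carrier_eq by auto
    then have "\<nu> (m w' (m y z)) = \<nu> (m ?w (m y z))"
      using W w S quot_mult_proj[of w' "m y z"] by simp
    then show "W = \<nu> ?w" using proj_mult_right_cancel[of w' ?w "m y z"] w w' S by simp
  qed
  moreover have "fperm Q mQ (\<nu> y) (\<nu> z) (\<nu> x) = rdiv Q mQ (\<nu> (m (m x y) z)) (\<nu> (m y z))"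
    using S by (simp add: fperm_def quot_carrier_eq quot_mult_proj)
  ultimately show ?thesis by simp
qed

end

lemma inv_into_intertwining:
  assumes a: "bij_betw a S S" and b: "bij_betw b T T" and \<nu>: "\<nu> \<in> S \<rightarrow> T"
    and commute: "\<And>x. x \<in> S \<Longrightarrow> b (\<nu> x) = \<nu> (a x)" and x: "x \<in> S"
  shows "inv_into T b (\<nu> x) = \<nu> (inv_into S a x)"
proof -
  have x': "inv_into S a x \<in> S" "a (inv_into S a x) = x"
    using a x by (auto intro: bij_betw_apply bij_betw_inv_into bij_betw_inv_into_right)
  then have "b (\<nu> (inv_into S a x)) = \<nu> x" using commute by simp
  then show ?thesis
    using b x' \<nu> by (intro inv_into_f_eq) (auto simp: bij_betw_def)
qed

lemma BijGroup_hom_inv: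
  assumes hom: "\<theta> \<in> hom (subgroup_generated (BijGroup S) A) (subgroup_generated (BijGroup T) B)"
    and a: "a \<in> carrier (subgroup_generated (BijGroup S) A)"
  shows "\<theta> (inv\<^bsub>BijGroup S\<^esub> a) = restrict (inv_into T (\<theta> a)) T"
proof -
  let ?G = "subgroup_generated (BijGroup S) A" and ?H = "subgroup_generated (BijGroup T) B"
  have "group ?G" "group ?H" by (rule group.group_subgroup_generated[OF group_BijGroup])+
  then have GH: "group_hom ?G ?H \<theta>"
    using hom by (simp add: group_hom_def group_hom_axioms_def)
  have \<theta>a: "\<theta> a \<in> carrier ?H" using hom a by (auto simp: hom_def)
  have "\<theta> (inv\<^bsub>BijGroup S\<^esub> a) = \<theta> (inv\<^bsub>?G\<^esub> a)"
    using group.inv_subgroup_generated[OF group_BijGroup] a by metis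
  also have "\<dots> = inv\<^bsub>?H\<^esub> (\<theta> a)"
    using group_hom.hom_inv[OF GH a] .
  also have "\<dots> = inv\<^bsub>BijGroup T\<^esub> (\<theta> a)"
    using group.inv_subgroup_generated[OF group_BijGroup] \<theta>a by metis
  also have "\<dots> = restrict (inv_into T (\<theta> a)) T"
  proof (rule inv_BijGroup)
    show "\<theta> a \<in> Bij T"
      using \<theta>a group.carrier_subgroup_generated_subset[OF group_BijGroup] by (auto simp: BijGroup_def)
  qed
  finally show ?thesis .
qed

lemma generated_intertwining:
  fixes \<theta> :: "('a \<Rightarrow> 'a) \<Rightarrow> 'b \<Rightarrow> 'b" and S :: "'a set" and A :: "('a \<Rightarrow> 'a) set"
    and T :: "'b set" and B :: "('b \<Rightarrow> 'b) set" and \<nu> :: "'a \<Rightarrow> 'b" and g :: "'a \<Rightarrow> 'a"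
  defines "G \<equiv> subgroup_generated (BijGroup S) A" and "H \<equiv> subgroup_generated (BijGroup T) B"
  assumes hom: "\<theta> \<in> hom G H" and \<nu>: "\<nu> \<in> S \<rightarrow> T"
    and gen: "\<And>a x. a \<in> A \<Longrightarrow> a \<in> Bij S \<Longrightarrow> x \<in> S \<Longrightarrow> \<theta> a (\<nu> x) = \<nu> (a x)"
    and g: "g \<in> carrier G"
  shows "\<forall>x\<in>S. \<theta> g (\<nu> x) = \<nu> (g x)"
proof -
  have G_Bij: "carrier G \<subseteq> Bij S" and H_Bij: "carrier H \<subseteq> Bij T"
    using group.carrier_subgroup_generated_subset[OF group_BijGroup]
    by (auto simp: G_def H_def BijGroup_def)
  have mult_G: "\<And>g h. g \<in> carrier G \<Longrightarrow> h \<in> carrier G \<Longrightarrow> g \<otimes>\<^bsub>G\<^esub> h = compose S g h"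
    and mult_H: "\<And>g h. g \<in> carrier H \<Longrightarrow> h \<in> carrier H \<Longrightarrow> g \<otimes>\<^bsub>H\<^esub> h = compose T g h"
    using G_Bij H_Bij by (auto simp: G_def H_def BijGroup_def)
  have carrier_G: "carrier G = generate (BijGroup S) (Bij S \<inter> A)"
    by (simp add: G_def carrier_subgroup_generated BijGroup_def)
  show ?thesis
    using g unfolding carrier_G
  proof (induction rule: generate.induct)
    case one
    have "group G" "group H"
      unfolding G_def H_def by (rule group.group_subgroup_generated[OF group_BijGroup])+
    then have "group_hom G H \<theta>"
      using hom by (simp add: group_hom_def group_hom_axioms_def)
    then have "\<theta> \<one>\<^bsub>G\<^esub> = \<one>\<^bsub>H\<^esub>" by (rule group_hom.hom_one)
    then have "\<theta> (\<lambda>x\<in>S. x) = (\<lambda>y\<in>T. y)" by (simp add: G_def H_def BijGroup_def)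
    then show ?case using \<nu> by (auto simp: BijGroup_def restrict_def)
  next
    case (incl a)
    then show ?case using gen by blast
  next
    case (inv a)
    have a: "a \<in> carrier G" using inv generate.incl carrier_G by metis
    then have "bij_betw (\<theta> a) T T" using hom H_Bij by (auto simp: hom_def Bij_def)
    moreover have "bij_betw a S S" using inv by (simp add: Bij_def)
    ultimately have "inv_into T (\<theta> a) (\<nu> x) = \<nu> (inv_into S a x)" if "x \<in> S" for x
      using inv_into_intertwining[of a S "\<theta> a" T \<nu>] inv gen \<nu> that by (simp add: Bij_def)
    then show ?case
      using BijGroup_hom_inv[OF hom[unfolded G_def H_def] a[unfolded G_def]] inv_BijGroup[of a S] inv \<nu>
      by (auto simp: restrict_def)
  next
    case (eng a b)
    then have ab: "a \<in> carrier G" "b \<in> carrier G" using carrier_G by auto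
    then have \<theta>ab: "\<theta> a \<in> carrier H" "\<theta> b \<in> carrier H" using hom by (auto simp: hom_def)
    have mult_eq: "a \<otimes>\<^bsub>BijGroup S\<^esub> b = a \<otimes>\<^bsub>G\<^esub> b" by (simp add: G_def)
    show ?case
    proof
      fix x assume x: "x \<in> S"
      have "\<theta> (a \<otimes>\<^bsub>BijGroup S\<^esub> b) (\<nu> x) = compose T (\<theta> a) (\<theta> b) (\<nu> x)"
        using hom ab \<theta>ab mult_H by (simp add: mult_eq hom_mult)
      also have "\<dots> = \<nu> (a (b x))"
        using eng.IH x \<nu> ab G_Bij Bij_imp_funcset by (force simp: compose_def)
      also have "a (b x) = (a \<otimes>\<^bsub>BijGroup S\<^esub> b) x"
        using ab x by (simp add: mult_eq mult_G compose_def)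
      finally show "\<theta> (a \<otimes>\<^bsub>BijGroup S\<^esub> b) (\<nu> x) = \<nu> ((a \<otimes>\<^bsub>BijGroup S\<^esub> b) x)" .
    qed
  qed
qed

lemma group_GS: "group (GS S m)"
  unfolding GS_def by (rule group.group_subgroup_generated[OF group_BijGroup])

lemma GS_carrier_Bij: "carrier (GS S m) \<subseteq> Bij S"
  using group.carrier_subgroup_generated_subset[OF group_BijGroup]
  unfolding GS_def by (auto simp: BijGroup_def)

lemma GS_apply_closed: "g \<in> carrier (GS S m) \<Longrightarrow> x \<in> S \<Longrightarrow> g x \<in> S"
  using GS_carrier_Bij Bij_imp_funcset by blast

lemma GS_mult: "g \<in> carrier (GS S m) \<Longrightarrow> h \<in> carrier (GS S m) \<Longrightarrow> g \<otimes>\<^bsub>GS S m\<^esub> h = compose S g h"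
  using GS_carrier_Bij by (auto simp: GS_def BijGroup_def)

context rloop
begin

lemma GS_commutes_central:
  assumes g: "g \<in> carrier (GS S m)" and t: "t \<in> central" and x: "x \<in> S"
  shows "g (m t x) = m t (g x)"
proof -
  have "id \<in> hom (GS S m) (GS S m)" by (simp add: hom_def)
  moreover have "m t \<in> S \<rightarrow> S" using t central_closed by simp
  moreover have "id a (m t x) = m t (a x)"
    if "a \<in> {fperm S m y z |y z. y \<in> S \<and> z \<in> S}" "x \<in> S" for a x
    using that fperm_central_translate[OF t] by auto
  ultimately have "\<forall>x\<in>S. id g (m t x) = m t (g x)"
    using g unfolding GS_def by (rule generated_intertwining)
  then show ?thesis using x by simp
qed

lemma induced_hom_proj:
  assumes hom: "\<theta> \<in> hom (GS S m) (GS Q mQ)"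
    and gens: "\<And>y z. y \<in> S \<Longrightarrow> z \<in> S \<Longrightarrow> \<theta> (fperm S m y z) = fperm Q mQ (\<nu> y) (\<nu> z)"
    and g: "g \<in> carrier (GS S m)" and x: "x \<in> S"
  shows "\<theta> g (\<nu> x) = \<nu> (g x)"
proof -
  have "\<nu> \<in> S \<rightarrow> Q" using quot_carrier_eq by auto
  moreover have "\<theta> a (\<nu> x) = \<nu> (a x)"
    if "a \<in> {fperm S m y z |y z. y \<in> S \<and> z \<in> S}" "x \<in> S" for a x
    using that gens fperm_quot_proj by auto
  ultimately have "\<forall>x\<in>S. \<theta> g (\<nu> x) = \<nu> (g x)"
    using hom g unfolding GS_def by (intro generated_intertwining)
  then show ?thesis using x by simp
qed

lemma group_prod_copies: "group (prod_copies I central m e)"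
proof (rule groupI)
  let ?P = "prod_copies I central m e"
  have carrier: "carrier ?P = (\<Pi>\<^sub>E i\<in>I. central)"
    and mult: "\<And>f g. f \<otimes>\<^bsub>?P\<^esub> g = (\<lambda>i\<in>I. m (f i) (g i))"
    and one: "\<one>\<^bsub>?P\<^esub> = (\<lambda>i\<in>I. e)"
    by (simp_all add: prod_copies_def)
  show "\<one>\<^bsub>?P\<^esub> \<in> carrier ?P" by (simp add: carrier one)
  fix f g h assume f: "f \<in> carrier ?P" and g: "g \<in> carrier ?P" and h: "h \<in> carrier ?P"
  show "f \<otimes>\<^bsub>?P\<^esub> g \<in> carrier ?P"
    using f g central_mult_closed by (auto simp: carrier mult)
  show "f \<otimes>\<^bsub>?P\<^esub> g \<otimes>\<^bsub>?P\<^esub> h = f \<otimes>\<^bsub>?P\<^esub> (g \<otimes>\<^bsub>?P\<^esub> h)"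
    unfolding mult using f g h central_assoc central_closed
    by (intro restrict_ext) (auto simp: carrier PiE_iff)
  show "\<one>\<^bsub>?P\<^esub> \<otimes>\<^bsub>?P\<^esub> f = f"
    using f central_closed by (auto simp: carrier mult one PiE_iff extensional_def)
  show "\<exists>g\<in>carrier ?P. g \<otimes>\<^bsub>?P\<^esub> f = \<one>\<^bsub>?P\<^esub>"
  proof
    show "(\<lambda>i\<in>I. cinv (f i)) \<in> carrier ?P" using f cinv_central by (auto simp: carrier)
    show "(\<lambda>i\<in>I. cinv (f i)) \<otimes>\<^bsub>?P\<^esub> f = \<one>\<^bsub>?P\<^esub>"
      unfolding mult one using f cinv_mult by (intro restrict_ext) (auto simp: carrier)
  qed
qed

lemma central_rel_rdiv:
  assumes "(x, y) \<in> central_rel"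
  shows "rdiv S m y x \<in> central" "y = m (rdiv S m y x) x"
  using assms central_closed by (auto simp: central_rel_iff)

definition coset_preserving :: "('a \<Rightarrow> 'a) set" where
  "coset_preserving = {g \<in> carrier (GS S m). \<forall>x\<in>S. (x, g x) \<in> central_rel}"

definition coset_rep :: "'a set \<Rightarrow> 'a" where
  "coset_rep A = (SOME x. x \<in> S \<and> A = \<nu> x)"

lemma coset_rep: "A \<in> Q \<Longrightarrow> coset_rep A \<in> S \<and> A = \<nu> (coset_rep A)"
  unfolding coset_rep_def quot_carrier_eq by (rule someI_ex) blast

definition coset_translation :: "('a \<Rightarrow> 'a) \<Rightarrow> 'a set \<Rightarrow> 'a" where
  "coset_translation g = (\<lambda>A\<in>Q. rdiv S m (g (coset_rep A)) (coset_rep A))"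

lemma coset_translation_central:
  "g \<in> coset_preserving \<Longrightarrow> A \<in> Q \<Longrightarrow> coset_translation g A \<in> central"
  using coset_rep central_rel_rdiv by (simp add: coset_preserving_def coset_translation_def)

lemma apply_eq_coset_translation:
  assumes g: "g \<in> coset_preserving" and x: "x \<in> S"
  shows "g x = m (coset_translation g (\<nu> x)) x"
proof -
  let ?r = "coset_rep (\<nu> x)" and ?c = "coset_translation g (\<nu> x)"
  have A: "\<nu> x \<in> Q" using x quot_carrier_eq by auto
  then have r: "?r \<in> S" "\<nu> ?r = \<nu> x" using coset_rep by auto
  then obtain u where u: "u \<in> central" "x = m u ?r"
    using x by (auto simp: proj_eq_iff central_rel_iff)
  have c: "?c \<in> central" "g ?r = m ?c ?r"
    using coset_translation_central[OF g A] central_rel_rdiv g r A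
    by (auto simp: coset_preserving_def coset_translation_def)
  have "g x = g (m u ?r)" using u(2) by (rule arg_cong)
  also have "\<dots> = m u (g ?r)"
    using GS_commutes_central u r g by (simp add: coset_preserving_def)
  also have "\<dots> = m ?c (m u ?r)"
    using central_assoc central_commute u c r central_closed by metis
  also have "\<dots> = m ?c x" by (simp only: u(2)[symmetric])
  finally show ?thesis .
qed

lemma coset_translation_mult:
  assumes g: "g \<in> coset_preserving" and h: "h \<in> coset_preserving"
  shows "coset_translation (g \<otimes>\<^bsub>GS S m\<^esub> h)
    = coset_translation g \<otimes>\<^bsub>prod_copies Q central m e\<^esub> coset_translation h"
proof
  fix A
  have GS: "g \<in> carrier (GS S m)" "h \<in> carrier (GS S m)"
    and preserve: "\<And>x. x \<in> S \<Longrightarrow> (x, h x) \<in> central_rel"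
    using g h by (auto simp: coset_preserving_def)
  show "coset_translation (g \<otimes>\<^bsub>GS S m\<^esub> h) A
    = (coset_translation g \<otimes>\<^bsub>prod_copies Q central m e\<^esub> coset_translation h) A"
  proof (cases "A \<in> Q")
    case A: True
    let ?r = "coset_rep A" and ?s = "coset_translation g A" and ?t = "coset_translation h A"
    have r: "?r \<in> S" "\<nu> ?r = A" using coset_rep A by auto
    have st: "?s \<in> central" "?t \<in> central" using coset_translation_central g h A by auto
    have hr: "h ?r = m ?t ?r" "h ?r \<in> S"
      using apply_eq_coset_translation[OF h r(1)] GS_apply_closed[OF GS(2) r(1)] r(2) by simp_all
    have "\<nu> (h ?r) = A" using preserve r hr proj_eq_iff by metis
    then have "(g \<otimes>\<^bsub>GS S m\<^esub> h) ?r = m (m ?s ?t) ?r"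
      using apply_eq_coset_translation[OF g hr(2)] hr r st central_assoc central_closed GS
      by (simp add: GS_mult compose_def)
    then show ?thesis
      using A r st central_mult_closed central_commute central_closed
      by (simp add: coset_translation_def prod_copies_def)
  qed (simp add: coset_translation_def prod_copies_def)
qed

lemma inj_on_coset_translation: "inj_on coset_translation coset_preserving"
proof (rule inj_onI)
  fix g h assume g: "g \<in> coset_preserving" and h: "h \<in> coset_preserving"
    and eq: "coset_translation g = coset_translation h"
  show "g = h"
  proof (rule extensionalityI[of _ S])
    show "g \<in> extensional S" "h \<in> extensional S"
      using g h GS_carrier_Bij[of S m] Bij_imp_extensional by (auto simp: coset_preserving_def)
    show "g x = h x" if "x \<in> S" for x
      using apply_eq_coset_translation[OF g that] apply_eq_coset_translation[OF h that] eq by simp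
  qed
qed

lemma coset_preserving_subgroup_embeds:
  assumes K: "subgroup K (GS S m)" "K \<subseteq> coset_preserving"
  shows "\<exists>(\<A> :: 'a set set) H. subgroup H (prod_copies \<A> central m e)
           \<and> (GS S m)\<lparr>carrier := K\<rparr> \<cong> (prod_copies \<A> central m e)\<lparr>carrier := H\<rparr>"
proof -
  let ?P = "prod_copies Q central m e" and ?K = "(GS S m)\<lparr>carrier := K\<rparr>"
  have hom: "coset_translation \<in> hom ?K ?P"
  proof (rule homI)
    show "coset_translation g \<in> carrier ?P" if "g \<in> carrier ?K" for g
      using that K coset_translation_central by (auto simp: prod_copies_def coset_translation_def)
    show "coset_translation (g \<otimes>\<^bsub>?K\<^esub> h) = coset_translation g \<otimes>\<^bsub>?P\<^esub> coset_translation h"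
      if "g \<in> carrier ?K" "h \<in> carrier ?K" for g h
      using that K coset_translation_mult by auto
  qed
  then have "subgroup (coset_translation ` K) ?P"
    using group_hom.img_is_subgroup subgroup.subgroup_is_group[OF K(1) group_GS] group_prod_copies
    by (fastforce simp: group_hom_def group_hom_axioms_def)
  moreover have "coset_translation \<in> iso ?K (?P\<lparr>carrier := coset_translation ` K\<rparr>)"
    using hom K inj_on_subset[OF inj_on_coset_translation] by (auto simp: iso_iff hom_def)
  ultimately show ?thesis by (blast intro: is_isoI)
qed

lemma kernel_subset_coset_preserving:
  assumes hom: "\<theta> \<in> hom (GS S m) (GS Q mQ)"
    and gens: "\<And>y z. y \<in> S \<Longrightarrow> z \<in> S \<Longrightarrow> \<theta> (fperm S m y z) = fperm Q mQ (\<nu> y) (\<nu> z)"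
  shows "kernel (GS S m) (GS Q mQ) \<theta> \<subseteq> coset_preserving"
proof
  fix g assume "g \<in> kernel (GS S m) (GS Q mQ) \<theta>"
  then have g: "g \<in> carrier (GS S m)" and \<theta>g: "\<theta> g = (\<lambda>A\<in>Q. A)"
    by (simp_all add: kernel_def GS_def BijGroup_def)
  have "(x, g x) \<in> central_rel" if x: "x \<in> S" for x
  proof -
    have "\<nu> (g x) = \<theta> g (\<nu> x)" using induced_hom_proj[OF hom gens g x] by simp
    also have "\<dots> = \<nu> x" using \<theta>g x quot_carrier_eq by simp
    finally show ?thesis using proj_eq_iff GS_apply_closed[OF g x] x by blast
  qed
  then show "g \<in> coset_preserving" using g by (simp add: coset_preserving_def)
qed

lemma kernel_embeds_in_prod_copies:
  assumes hom: "\<theta> \<in> hom (GS S m) (GS Q mQ)"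
    and gens: "\<And>y z. y \<in> S \<Longrightarrow> z \<in> S \<Longrightarrow> \<theta> (fperm S m y z) = fperm Q mQ (\<nu> y) (\<nu> z)"
  shows "\<exists>(\<A> :: 'a set set) H. subgroup H (prod_copies \<A> central m e)
           \<and> (GS S m)\<lparr>carrier := kernel (GS S m) (GS Q mQ) \<theta>\<rparr>
               \<cong> (prod_copies \<A> central m e)\<lparr>carrier := H\<rparr>"
proof (rule coset_preserving_subgroup_embeds)
  show "subgroup (kernel (GS S m) (GS Q mQ) \<theta>) (GS S m)"
    using hom group_GS[of S m] group_GS[of Q mQ]
    by (intro group_hom.subgroup_kernel) (simp add: group_hom_def group_hom_axioms_def)
  show "kernel (GS S m) (GS Q mQ) \<theta> \<subseteq> coset_preserving"
    using hom gens by (rule kernel_subset_coset_preserving)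
qed

end

theorem mainTheorem12:
  fixes S :: "'a set" and m :: "'a \<Rightarrow> 'a \<Rightarrow> 'a" and e :: "'a"
    and \<theta> :: "('a \<Rightarrow> 'a) \<Rightarrow> ('a set \<Rightarrow> 'a set)"
  defines "Z \<equiv> center S m e"
  defines "Q \<equiv> quot_carrier S m Z"
  defines "mQ \<equiv> quot_mult S m Z"
  defines "\<nu> \<equiv> rcoset m Z"
  assumes loop: "right_loop S m e"
    and hom: "\<theta> \<in> hom (GS S m) (GS Q mQ)"
    and gens: "\<And>y z. y \<in> S \<Longrightarrow> z \<in> S \<Longrightarrow> \<theta> (fperm S m y z) = fperm Q mQ (\<nu> y) (\<nu> z)"
  shows "\<exists>(\<A> :: 'a set set) H. subgroup H (prod_copies \<A> Z m e)
           \<and> (GS S m)\<lparr>carrier := kernel (GS S m) (GS Q mQ) \<theta>\<rparr>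
               \<cong> (prod_copies \<A> Z m e)\<lparr>carrier := H\<rparr>"
proof -
  interpret rloop S m e by (rule rloop.intro[OF loop])
  have Z: "Z = central" by (simp add: Z_def center_eq)
  show ?thesis
    using kernel_embeds_in_prod_copies hom gens unfolding Q_def mQ_def \<nu>_def Z by blast
qed

end
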